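(* Under Assumption 1, almost surely, for all sufficiently large $N^*$ the true partition $\mathcal{X}^*$ belongs to $\mathscr{C}$ and is the unique minimizer of $D$ over $\mathscr{C}$; i.e., $\arg\min_{\mathcal{Y}\in\mathscr{C}}D(\mathcal{Y})\to\mathcal{X}^*$ almost surely.
   Context: $X$ is finite, $\mathscr{A}$ the nonempty subsets. True probabilities $\bar p$ form a nondegenerate NSC with representation $(v,u,\mathcal{X}^* )$, $\mathcal{X}^*=\{X_1,\dots,X_K\}$, $K\ge2$: $\bar p(a,A)=\frac{v(A\cap X_i)}{\sum_j v(A\cap X_j)}\frac{u(a)}{\sum_{b\in A\cap X_i}u(b)}$ for $a\in A\cap X_i$, $u>0$, $v(\emptyset)=0$, $\bar p(a,A)>0$ for $a\in A$; nondegenerate: at most one $i$ for which some $a\in X_i$ satisfies $\frac{\sum_{x\in A_i}u(x)}{v(A_i)}=\frac{u(a)}{v(\{a\})}$ for all $A_i\subseteq X_i$ containing $a$. Data: for each menu $A$, $N_A$ independent choices from $\bar p(\cdot,A)$, independent across menus; $p(a,A)$ the observed frequency; $N^*=\min_A N_A\to\infty$ along nested samples. $p(A',A)=\sum_{a\in A'}p(a,A)$, $r_A(A',B')=p(A',A)/p(B',A)$, $\bar r_A$ likewise with $\bar p$, $r_A(a,b)=r_A(\{a\},\{b\})$. $D=D_1+D_2$ where, for a partition $\mathcal{Y}$: $D_1(\mathcal{Y})$ is the average over tuples $(Y,A,B,a,b)$ with $Y\in\mathcal{Y}$, $a,b\in A\cap B\cap Y$ of $(\log r_A(a,b)-\log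 r_B(a,b))^2$; $D_2(\mathcal{Y})$ is the average over tuples $(Y,Y',A,B)$ with $Y,Y'\in\mathcal{Y}$, $A\cap Y=B\cap Y\ne\emptyset$, $A\cap Y'=B\cap Y'\ne\emptyset$ of $(\log r_A(Y,Y')-\log r_B(Y,Y'))^2$. $d(a,b)$ is the average over $(A,B)$ with $a,b\in A\cap B$ of $(\log r_A(a,b)-\log r_B(a,b))^2$; $\bar\epsilon=\max_{a,b}d(a,b)$; $a\sim_\epsilon b$ iff $d(a,b)<\epsilon$; $\mathscr{C}=\{X/\!\sim_\epsilon:\epsilon\in(0,\bar\epsilon],\ \sim_\epsilon\text{ transitive}\}$. Assumption 1: for all distinct $i,j\le K$, every nonempty $A_i\subsetneq X_i$ and nonempty $A_j\subseteq X_j$, there exist $A,B\in\mathscr{A}$ with $A_i\cup A_j\subseteq A\cap B$ and $\bar r_A(A_i,A_j)\ne\bar r_B(A_i,A_j)$. *)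

theory Defs
  imports "HOL-Probability.Probability"
begin

text \<open>The finite set of alternatives X is the (finite) universe of the type 'a.
  Menus are the nonempty subsets.\<close>

definition menus :: "'a set set" where
  "menus = {A. A \<noteq> {}}"

definition is_partition :: "'a set set \<Rightarrow> bool" where
  "is_partition Ys \<longleftrightarrow> {} \<notin> Ys \<and> \<Union>Ys = UNIV \<and>
     (\<forall>Y\<in>Ys. \<forall>Y'\<in>Ys. Y \<noteq> Y' \<longrightarrow> Y \<inter> Y' = {})"

definition is_NSC :: "'a set set \<Rightarrow> ('a set \<Rightarrow> real) \<Rightarrow> ('a \<Rightarrow> real) \<Rightarrow> ('a \<Rightarrow> 'a set \<Rightarrow> real) \<Rightarrow> bool" where
  "is_NSC Xs v u pbar \<longleftrightarrow> is_partition Xs \<and> (\<forall>a. u a > 0) \<and> v {} = 0 \<and>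
     (\<forall>A\<in>menus. \<forall>Xi\<in>Xs. \<forall>a\<in>A \<inter> Xi.
        pbar a A = v (A \<inter> Xi) / (\<Sum>Xj\<in>Xs. v (A \<inter> Xj)) * (u a / (\<Sum>b\<in>A \<inter> Xi. u b))) \<and>
     (\<forall>A\<in>menus. \<forall>a\<in>A. pbar a A > 0)"

definition nondegenerate :: "'a set set \<Rightarrow> ('a set \<Rightarrow> real) \<Rightarrow> ('a \<Rightarrow> real) \<Rightarrow> bool" where
  "nondegenerate Xs v u \<longleftrightarrow>
     card {Xi\<in>Xs. \<exists>a\<in>Xi. \<forall>Ai. Ai \<subseteq> Xi \<and> a \<in> Ai \<longrightarrow>
        (\<Sum>x\<in>Ai. u x) / v Ai = u a / v {a}} \<le> 1"

definition pset :: "('a \<Rightarrow> 'a set \<Rightarrow> real) \<Rightarrow> 'a set \<Rightarrow> 'a set \<Rightarrow> real" where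
  "pset p A' A = (\<Sum>a\<in>A'. p a A)"

definition rat :: "('a \<Rightarrow> 'a set \<Rightarrow> real) \<Rightarrow> 'a set \<Rightarrow> 'a set \<Rightarrow> 'a set \<Rightarrow> real" where
  "rat p A A' B' = pset p A' A / pset p B' A"

definition assumption1 :: "'a set set \<Rightarrow> ('a \<Rightarrow> 'a set \<Rightarrow> real) \<Rightarrow> bool" where
  "assumption1 Xs pbar \<longleftrightarrow>
     (\<forall>Xi\<in>Xs. \<forall>Xj\<in>Xs. Xi \<noteq> Xj \<longrightarrow>
        (\<forall>Ai Aj. Ai \<noteq> {} \<and> Ai \<subset> Xi \<and> Aj \<noteq> {} \<and> Aj \<subseteq> Xj \<longrightarrow>
           (\<exists>A\<in>menus. \<exists>B\<in>menus. Ai \<union> Aj \<subseteq> A \<inter> B \<and>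
               rat pbar A Ai Aj \<noteq> rat pbar B Ai Aj)))"

definition avg :: "('b \<Rightarrow> real) \<Rightarrow> 'b set \<Rightarrow> real" where
  "avg f S = (\<Sum>x\<in>S. f x) / real (card S)"

definition D1 :: "('a \<Rightarrow> 'a set \<Rightarrow> real) \<Rightarrow> 'a set set \<Rightarrow> real" where
  "D1 p Ys = avg (\<lambda>(Y, A, B, a, b). (ln (rat p A {a} {b}) - ln (rat p B {a} {b}))\<^sup>2)
     {(Y, A, B, a, b). Y \<in> Ys \<and> A \<in> menus \<and> B \<in> menus \<and> a \<in> A \<inter> B \<inter> Y \<and> b \<in> A \<inter> B \<inter> Y}"

definition D2 :: "('a \<Rightarrow> 'a set \<Rightarrow> real) \<Rightarrow> 'a set set \<Rightarrow> real" where
  "D2 p Ys = avg (\<lambda>(Y, Y', A, B). (ln (rat p A Y Y') - ln (rat p B Y Y'))\<^sup>2)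
     {(Y, Y', A, B). Y \<in> Ys \<and> Y' \<in> Ys \<and> A \<in> menus \<and> B \<in> menus \<and>
        A \<inter> Y = B \<inter> Y \<and> A \<inter> Y \<noteq> {} \<and> A \<inter> Y' = B \<inter> Y' \<and> A \<inter> Y' \<noteq> {}}"

definition DD :: "('a \<Rightarrow> 'a set \<Rightarrow> real) \<Rightarrow> 'a set set \<Rightarrow> real" where
  "DD p Ys = D1 p Ys + D2 p Ys"

definition dist_ab :: "('a \<Rightarrow> 'a set \<Rightarrow> real) \<Rightarrow> 'a \<Rightarrow> 'a \<Rightarrow> real" where
  "dist_ab p a b = avg (\<lambda>(A, B). (ln (rat p A {a} {b}) - ln (rat p B {a} {b}))\<^sup>2)
     {(A, B). A \<in> menus \<and> B \<in> menus \<and> a \<in> A \<inter> B \<and> b \<in> A \<inter> B}"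

definition epsbar :: "('a \<Rightarrow> 'a set \<Rightarrow> real) \<Rightarrow> real" where
  "epsbar p = Max {dist_ab p a b | a b. True}"

definition simrel :: "('a \<Rightarrow> 'a set \<Rightarrow> real) \<Rightarrow> real \<Rightarrow> 'a rel" where
  "simrel p \<epsilon> = {(a, b). dist_ab p a b < \<epsilon>}"

definition cands :: "('a \<Rightarrow> 'a set \<Rightarrow> real) \<Rightarrow> 'a set set set" where
  "cands p = {UNIV // simrel p \<epsilon> | \<epsilon>. 0 < \<epsilon> \<and> \<epsilon> \<le> epsbar p \<and> trans (simrel p \<epsilon>)}"

text \<open>Observed frequencies in the n-th sample: Ch A k is the k-th recorded choice from menu A,
  the n-th (nested) sample uses the first N A n of them.\<close>
definition freq :: "('a set \<Rightarrow> nat \<Rightarrow> 'w \<Rightarrow> 'a) \<Rightarrow> ('a set \<Rightarrow> nat \<Rightarrow> nat) \<Rightarrow> nat \<Rightarrow> 'w \<Rightarrow> 'a \<Rightarrow> 'a set \<Rightarrow> real" where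
  "freq Ch N n \<omega> a A = real (card {k. k < N A n \<and> Ch A k \<omega> = a}) / real (N A n)"

end

theory Submission
  imports Defs
begin

text \<open>Along almost every sample path the observed frequencies converge to the true choice
  probabilities: for each menu and alternative, Hoeffding's inequality bounds the deviation
  probabilities by a geometric series, and Borel--Cantelli turns this into almost sure convergence.
  In the limit, \<open>d(a, b)\<close> vanishes exactly when \<open>a\<close> and \<open>b\<close> share a block of \<open>\<X>\<^sup>*\<close>, and
  \<open>D\<close> vanishes at \<open>\<X>\<^sup>*\<close>; Assumption 1 together with nondegeneracy makes \<open>d\<close> positive across
  blocks and \<open>D\<close> positive at every other covering of \<open>X\<close>, in particular at every other
  candidate. All criteria are continuous in the frequencies at the limit, so for large samples a
  fixed threshold \<open>\<epsilon>\<close> strictly between the two values of \<open>d\<close> yields \<open>X/\<sim>\<^sub>\<epsilon> = \<X>\<^sup>*\<close>, and \<open>D\<close>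
  separates \<open>\<X>\<^sup>*\<close> from the finitely many other candidates.\<close>

section \<open>Strong law of large numbers for the observed frequencies\<close>

lemma (in prob_space) prob_sum_deviation_le:
  fixes Z :: "'i \<Rightarrow> 'a \<Rightarrow> real" and g :: "nat \<Rightarrow> 'i" and \<mu> \<delta> :: real
  assumes indep: "indep_vars (\<lambda>_. borel) Z J" and g: "inj g" "range g \<subseteq> J"
    and bounded: "\<And>i x. Z i x \<in> {0..1}"
    and mean: "\<And>k. expectation (Z (g k)) = \<mu>"
    and "\<delta> > 0"
  shows "prob {x\<in>space M. m * \<delta> \<le> \<bar>(\<Sum>k<m. Z (g k) x) - m * \<mu>\<bar>} \<le> 2 * exp (-2 * \<delta>\<^sup>2) ^ m"
proof (cases "m = 0")
  case True
  then show ?thesis by (simp add: prob_space)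
next
  case False
  interpret H: Hoeffding_ineq M "g ` {..<m}" Z "\<lambda>_. 0" "\<lambda>_. 1" "\<Sum>i\<in>g ` {..<m}. expectation (Z i)"
  proof unfold_locales
    show "indep_vars (\<lambda>_. borel) Z (g ` {..<m})"
      using g(2) by (intro indep_vars_subset[OF indep]) auto
  qed (use bounded in auto)
  have inj: "inj_on g {..<m}" using g(1) by (simp add: inj_on_def inj_def)
  have card: "(\<Sum>i\<in>g ` {..<m}. ((1::real) - 0)\<^sup>2) = m"
    using card_image[OF inj] by simp
  have "prob {x\<in>space M. m * \<delta> \<le> \<bar>(\<Sum>k<m. Z (g k) x) - m * \<mu>\<bar>}
      = prob {x\<in>space M. m * \<delta> \<le> \<bar>(\<Sum>i\<in>g ` {..<m}. Z i x) - (\<Sum>i\<in>g ` {..<m}. expectation (Z i))\<bar>}"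
    by (simp add: sum.reindex[OF inj] mean)
  also have "\<dots> \<le> 2 * exp (-2 * (m * \<delta>)\<^sup>2 / (\<Sum>i\<in>g ` {..<m}. ((1::real) - 0)\<^sup>2))"
    by (rule H.Hoeffding_ineq_abs_ge) (use \<open>\<delta> > 0\<close> False card in auto)
  also have "-2 * (m * \<delta>)\<^sup>2 / (\<Sum>i\<in>g ` {..<m}. ((1::real) - 0)\<^sup>2) = m * (-2 * \<delta>\<^sup>2)"
    unfolding card using False by (simp add: power2_eq_square)
  also have "exp (m * (-2 * \<delta>\<^sup>2)) = exp (-2 * \<delta>\<^sup>2) ^ m"
    by (subst exp_of_nat_mult[symmetric]) simp
  finally show ?thesis .
qed

lemma (in prob_space) AE_eventually_sum_deviation_less:
  fixes Z :: "'i \<Rightarrow> 'a \<Rightarrow> real" and g :: "nat \<Rightarrow> 'i" and \<mu> \<delta> :: real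
  assumes indep: "indep_vars (\<lambda>_. borel) Z J" and g: "inj g" "range g \<subseteq> J"
    and bounded: "\<And>i x. Z i x \<in> {0..1}"
    and mean: "\<And>k. expectation (Z (g k)) = \<mu>"
    and "\<delta> > 0"
  shows "AE x in M. eventually (\<lambda>m. \<bar>(\<Sum>k<m. Z (g k) x) - m * \<mu>\<bar> < m * \<delta>) sequentially"
proof -
  define E where "E m = {x\<in>space M. m * \<delta> \<le> \<bar>(\<Sum>k<m. Z (g k) x) - m * \<mu>\<bar>}" for m :: nat
  have "random_variable borel (Z i)" if "i \<in> J" for i
    using indep that unfolding indep_vars_def by blast
  then have "(\<lambda>x. \<Sum>k<m. Z (g k) x) \<in> borel_measurable M" for m
    using g(2) by (intro borel_measurable_sum) auto
  then have events: "E m \<in> events" for m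
    unfolding E_def by measurable
  have "summable (\<lambda>m. 2 * exp (-2 * \<delta>\<^sup>2) ^ m)"
    using \<open>\<delta> > 0\<close> by (intro summable_mult summable_geometric) auto
  then have "summable (\<lambda>m. prob (E m))"
    by (rule summable_comparison_test'[where N = 0])
      (use prob_sum_deviation_le[OF assms] in \<open>auto simp: E_def\<close>)
  then have "AE x in M. eventually (\<lambda>m. x \<in> space M - E m) sequentially"
    by (intro borel_cantelli_AE1 events) (auto simp: emeasure_eq_measure)
  then show ?thesis
    by (rule AE_mp) (auto simp: E_def not_le elim!: eventually_mono)
qed

theorem (in prob_space) AE_averages_tendsto:
  fixes Z :: "'i \<Rightarrow> 'a \<Rightarrow> real" and g :: "nat \<Rightarrow> 'i" and \<mu> :: real
  assumes indep: "indep_vars (\<lambda>_. borel) Z J" and g: "inj g" "range g \<subseteq> J"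
    and bounded: "\<And>i x. Z i x \<in> {0..1}"
    and mean: "\<And>k. expectation (Z (g k)) = \<mu>"
  shows "AE x in M. (\<lambda>m. (\<Sum>k<m. Z (g k) x) / m) \<longlonglongrightarrow> \<mu>"
proof -
  have "AE x in M. \<forall>j::nat. eventually (\<lambda>m. \<bar>(\<Sum>k<m. Z (g k) x) - m * \<mu>\<bar> < m * (1 / Suc j)) sequentially"
    unfolding AE_all_countable
    by (intro allI AE_eventually_sum_deviation_less[OF indep g bounded mean]) simp
  then show ?thesis
  proof (rule AE_mp, intro AE_I2 impI LIMSEQ_I)
    fix x and r :: real
    assume dev: "\<forall>j::nat. eventually (\<lambda>m. \<bar>(\<Sum>k<m. Z (g k) x) - m * \<mu>\<bar> < m * (1 / Suc j)) sequentially"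
      and "0 < r"
    obtain j where j: "1 / Suc j < r"
      using \<open>0 < r\<close> by (metis nat_approx_posE)
    have "eventually (\<lambda>m. norm ((\<Sum>k<m. Z (g k) x) / m - \<mu>) < r) sequentially"
      using dev[rule_format, of j]
    proof (rule eventually_mono)
      fix m :: nat assume m: "\<bar>(\<Sum>k<m. Z (g k) x) - m * \<mu>\<bar> < m * (1 / Suc j)"
      then have "m > 0" by (auto intro: ccontr)
      then have "norm ((\<Sum>k<m. Z (g k) x) / m - \<mu>) = \<bar>(\<Sum>k<m. Z (g k) x) - m * \<mu>\<bar> / m"
        by (simp add: field_simps)
      also have "\<dots> < 1 / Suc j"
        using m \<open>m > 0\<close> by (simp add: divide_simps)
      finally show "norm ((\<Sum>k<m. Z (g k) x) / m - \<mu>) < r" using j by simp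
    qed
    then show "\<exists>m0. \<forall>m\<ge>m0. norm ((\<Sum>k<m. Z (g k) x) / m - \<mu>) < r"
      by (simp add: eventually_sequentially)
  qed
qed

lemma (in prob_space) prob_eq_0_outside_full_mass:
  assumes rv: "random_variable (count_space UNIV) X"
    and "finite S" and mass: "(\<Sum>s\<in>S. prob {x\<in>space M. X x = s}) = 1" and "t \<notin> S"
  shows "prob {x\<in>space M. X x = t} = 0"
proof -
  let ?E = "\<lambda>s. {x\<in>space M. X x = s}"
  have events: "?E s \<in> events" for s
    using measurable_sets[OF rv, of "{s}"] by (simp add: vimage_def Int_def conj_commute)
  have "prob (?E t) + 1 = (\<Sum>s\<in>insert t S. prob (?E s))"
    using \<open>finite S\<close> \<open>t \<notin> S\<close> mass by simp
  also have "\<dots> = prob (\<Union>s\<in>insert t S. ?E s)"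
    using \<open>finite S\<close> events
    by (intro finite_measure_finite_Union[symmetric]) (auto simp: disjoint_family_on_def)
  also have "\<dots> \<le> 1" by (rule prob_le_1)
  finally show ?thesis by (simp add: antisym)
qed

lemma (in prob_space) AE_freq_tendsto_prob:
  fixes Ch :: "'b set \<Rightarrow> nat \<Rightarrow> 'a \<Rightarrow> 'b"
  assumes indep: "indep_vars (\<lambda>_. count_space UNIV) (\<lambda>(A, k). Ch A k) (menus \<times> UNIV)"
    and "A \<in> menus"
    and distr: "\<And>k. prob {x\<in>space M. Ch A k x = a} = \<mu>"
    and N: "filterlim (N A) at_top sequentially"
  shows "AE x in M. (\<lambda>n. freq Ch N n x a A) \<longlonglongrightarrow> \<mu>"
proof -
  define Z :: "'b set \<times> nat \<Rightarrow> 'a \<Rightarrow> real" where "Z i x = of_bool ((\<lambda>(A, k). Ch A k) i x = a)" for i x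
  have indep_Z: "indep_vars (\<lambda>_. borel) Z (menus \<times> UNIV)"
    unfolding Z_def by (rule indep_vars_compose2[OF indep]) simp
  have mean: "expectation (Z (A, k)) = \<mu>" for k
  proof -
    have "expectation (Z (A, k)) = expectation (indicator {x\<in>space M. Ch A k x = a})"
      by (intro Bochner_Integration.integral_cong) (auto simp: Z_def indicator_def)
    then show ?thesis by (simp add: Int_absorb2 distr)
  qed
  have "AE x in M. (\<lambda>m. (\<Sum>k<m. Z (A, k) x) / m) \<longlonglongrightarrow> \<mu>"
    by (rule AE_averages_tendsto[OF indep_Z _ _ _ mean]) (use \<open>A \<in> menus\<close> in \<open>auto simp: Z_def inj_def\<close>)
  moreover have "freq Ch N n x a A = (\<Sum>k<N A n. Z (A, k) x) / N A n" for n x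
    by (simp add: freq_def Z_def Int_def conj_commute)
  ultimately show ?thesis
    by (elim AE_mp) (auto intro!: filterlim_compose[OF _ N])
qed

theorem (in prob_space) AE_freq_tendsto:
  fixes Ch :: "'b::finite set \<Rightarrow> nat \<Rightarrow> 'a \<Rightarrow> 'b" and p :: "'b \<Rightarrow> 'b set \<Rightarrow> real"
  assumes indep: "indep_vars (\<lambda>_. count_space UNIV) (\<lambda>(A, k). Ch A k) (menus \<times> UNIV)"
    and distr: "\<forall>A\<in>menus. \<forall>k. \<forall>a\<in>A. prob {x\<in>space M. Ch A k x = a} = p a A"
    and mass: "\<forall>A\<in>menus. (\<Sum>a\<in>A. p a A) = 1"
    and Nstar: "filterlim (\<lambda>n. Min ((\<lambda>A. N A n) ` menus)) at_top sequentially"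
  shows "AE x in M. \<forall>A\<in>menus. \<forall>a. (\<lambda>n. freq Ch N n x a A) \<longlonglongrightarrow> (if a \<in> A then p a A else 0)"
proof (intro AE_finite_allI)
  fix A :: "'b set" assume A: "A \<in> menus"
  have rv: "random_variable (count_space UNIV) (Ch A k)" for k
    using indep A unfolding indep_vars_def by auto
  have "prob {x\<in>space M. Ch A k x = a} = (if a \<in> A then p a A else 0)" for k a
    using distr mass A prob_eq_0_outside_full_mass[OF rv, where S = A and t = a] by auto
  moreover have "filterlim (N A) at_top sequentially"
    by (rule filterlim_at_top_mono[OF Nstar]) (use A in \<open>auto intro: Min_le\<close>)
  ultimately show "AE x in M. \<forall>a. (\<lambda>n. freq Ch N n x a A) \<longlonglongrightarrow> (if a \<in> A then p a A else 0)"
    unfolding AE_all_countable using AE_freq_tendsto_prob[OF indep A] by blast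
qed simp

lemma avg_nonneg: "(\<And>x. x \<in> S \<Longrightarrow> f x \<ge> 0) \<Longrightarrow> avg f S \<ge> 0"
  unfolding avg_def by (intro divide_nonneg_nonneg sum_nonneg) auto

lemma avg_pos:
  assumes "finite S" "\<And>x. x \<in> S \<Longrightarrow> f x \<ge> 0" "z \<in> S" "f z > 0"
  shows "avg f S > 0"
proof -
  have "sum f S > 0" using assms by (intro sum_pos2[of S z]) auto
  moreover have "card S > 0" using assms by (auto simp: card_gt_0_iff)
  ultimately show ?thesis unfolding avg_def by simp
qed

lemma avg_eq_0: "(\<And>x. x \<in> S \<Longrightarrow> f x = 0) \<Longrightarrow> avg f S = 0"
  unfolding avg_def by simp

lemma tendsto_avg:
  assumes "\<And>x. x \<in> S \<Longrightarrow> ((\<lambda>n. f n x) \<longlongrightarrow> g x) F"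
  shows "((\<lambda>n. avg (f n) S) \<longlongrightarrow> avg g S) F"
  unfolding avg_def divide_inverse by (intro tendsto_mult_right tendsto_sum assms)

lemma D1_nonneg: "D1 p Ys \<ge> 0"
  unfolding D1_def by (intro avg_nonneg) auto

lemma D2_nonneg: "D2 p Ys \<ge> 0"
  unfolding D2_def by (intro avg_nonneg) auto

lemma rat_singletons: "rat p A {a} {b} = p a A / p b A"
  by (simp add: rat_def pset_def)

lemma rat_swap: "rat p A Y Y' = inverse (rat p A Y' Y)"
  by (simp add: rat_def)

lemma dist_ab_self: "dist_ab p a a = 0"
proof -
  have "ln (rat p A {a} {a}) = 0" for A
    by (cases "p a A = 0") (simp_all add: rat_singletons)
  then show ?thesis unfolding dist_ab_def by (intro avg_eq_0) auto
qed

lemma finite_dist_ab_values: "finite {dist_ab p a b | a b. Q a b}" for p :: "'a::finite \<Rightarrow> _"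
  by (rule finite_subset[of _ "range (\<lambda>(a, b). dist_ab p a b)"]) auto

lemma cands_cover:
  assumes "Ys \<in> cands p"
  shows "{} \<notin> Ys" "\<Union>Ys = UNIV"
proof -
  obtain \<epsilon> where \<epsilon>: "Ys = UNIV // simrel p \<epsilon>" "0 < \<epsilon>"
    using assms unfolding cands_def by blast
  then have "(x, x) \<in> simrel p \<epsilon>" for x by (simp add: simrel_def dist_ab_self)
  then show "{} \<notin> Ys" "\<Union>Ys = UNIV" unfolding \<epsilon>(1) quotient_def by blast+
qed

lemma tendsto_sq_ln_rat_diff:
  fixes P :: "nat \<Rightarrow> 'a \<Rightarrow> 'a set \<Rightarrow> real"
  assumes "\<And>a. (\<lambda>n. P n a A) \<longlonglongrightarrow> p a A" "\<And>a. (\<lambda>n. P n a B) \<longlonglongrightarrow> p a B"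
    and "rat p A Y Y' > 0" "rat p B Y Y' > 0"
  shows "(\<lambda>n. (ln (rat (P n) A Y Y') - ln (rat (P n) B Y Y'))\<^sup>2)
    \<longlonglongrightarrow> (ln (rat p A Y Y') - ln (rat p B Y Y'))\<^sup>2"
proof -
  have "(\<lambda>n. pset (P n) Z C) \<longlonglongrightarrow> pset p Z C" if "C = A \<or> C = B" for Z C
    unfolding pset_def using that assms(1,2) by (auto intro!: tendsto_sum)
  moreover have "pset p Y' C \<noteq> 0" if "C = A \<or> C = B" for C
    using that assms(3,4) by (auto simp: rat_def)
  ultimately have "(\<lambda>n. rat (P n) C Y Y') \<longlonglongrightarrow> rat p C Y Y'" if "C = A \<or> C = B" for C
    unfolding rat_def using that by (intro tendsto_divide) auto
  then show ?thesis
    using assms(3,4) by (intro tendsto_intros) auto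
qed

section \<open>The criteria at the true choice probabilities\<close>

locale nsc_representation =
  fixes Xs :: "'a::finite set set" and v :: "'a set \<Rightarrow> real" and u :: "'a \<Rightarrow> real"
    and pbar :: "'a \<Rightarrow> 'a set \<Rightarrow> real"
  assumes nsc: "is_NSC Xs v u pbar"
begin

text \<open>Frequencies of alternatives outside the menu vanish, so this is the almost sure limit of
  the observed frequencies.\<close>
definition pext :: "'a \<Rightarrow> 'a set \<Rightarrow> real" where
  "pext a A = (if a \<in> A then pbar a A else 0)"

definition vtotal :: "'a set \<Rightarrow> real" where
  "vtotal A = (\<Sum>X\<in>Xs. v (A \<inter> X))"

lemma u_pos: "u a > 0"
  using nsc by (simp add: is_NSC_def)

lemma v_empty: "v {} = 0"
  using nsc by (simp add: is_NSC_def)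

lemma pbar_eq:
  "A \<in> menus \<Longrightarrow> X \<in> Xs \<Longrightarrow> a \<in> A \<inter> X \<Longrightarrow> pbar a A = v (A \<inter> X) / vtotal A * (u a / (\<Sum>b\<in>A \<inter> X. u b))"
  using nsc unfolding is_NSC_def vtotal_def by blast

lemma pbar_pos: "A \<in> menus \<Longrightarrow> a \<in> A \<Longrightarrow> pbar a A > 0"
  using nsc unfolding is_NSC_def by blast

lemma partition_Xs: "partition_on UNIV Xs"
  using nsc unfolding is_NSC_def is_partition_def partition_on_def disjoint_def by blast

lemma block_exists: "\<exists>X\<in>Xs. a \<in> X"
  using partition_Xs by (auto simp: partition_on_def)

lemma block_unique: "X \<in> Xs \<Longrightarrow> X' \<in> Xs \<Longrightarrow> a \<in> X \<Longrightarrow> a \<in> X' \<Longrightarrow> X = X'"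
  using partition_Xs by (auto simp: partition_on_def disjoint_def)

lemma block_nonempty: "X \<in> Xs \<Longrightarrow> X \<noteq> {}"
  using partition_Xs by (auto simp: partition_on_def)

lemma sum_over_blocks: "(\<Sum>X\<in>Xs. \<Sum>a\<in>A \<inter> X. f a) = (\<Sum>a\<in>A. f a :: real)"
proof -
  have "(\<Sum>X\<in>Xs. \<Sum>a\<in>A \<inter> X. f a) = (\<Sum>X\<in>Xs. \<Sum>a\<in>A. if a \<in> X then f a else 0)"
    by (rule sum.cong[OF refl]) (simp add: sum.inter_restrict[of A f])
  also have "\<dots> = (\<Sum>a\<in>A. \<Sum>X\<in>Xs. if a \<in> X then f a else 0)"
    by (rule sum.swap)
  also have "\<dots> = (\<Sum>a\<in>A. f a)"
  proof (intro sum.cong refl)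
    fix a
    obtain X where "X \<in> Xs" "a \<in> X" using block_exists by blast
    then have "(\<Sum>X'\<in>Xs. if a \<in> X' then f a else 0) = (\<Sum>X'\<in>Xs. if X' = X then f a else 0)"
      by (intro sum.cong refl) (use block_unique in auto)
    then show "(\<Sum>X'\<in>Xs. if a \<in> X' then f a else 0) = f a"
      using \<open>X \<in> Xs\<close> by simp
  qed
  finally show ?thesis .
qed

lemma vtotal_nonzero:
  assumes "A \<in> menus"
  shows "vtotal A \<noteq> 0"
proof
  assume "vtotal A = 0"
  obtain a where "a \<in> A" using assms by (auto simp: menus_def)
  moreover obtain X where "X \<in> Xs" "a \<in> X" using block_exists by blast
  ultimately have "pbar a A = 0" using pbar_eq[OF assms] \<open>vtotal A = 0\<close> by simp
  with pbar_pos[OF assms \<open>a \<in> A\<close>] show False by simp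
qed

lemma sum_pbar_block:
  assumes "A \<in> menus" "X \<in> Xs"
  shows "(\<Sum>a\<in>A \<inter> X. pbar a A) = v (A \<inter> X) / vtotal A"
proof (cases "A \<inter> X = {}")
  case True
  then show ?thesis by (simp add: v_empty)
next
  case False
  have "(\<Sum>a\<in>A \<inter> X. pbar a A)
      = (\<Sum>a\<in>A \<inter> X. v (A \<inter> X) / vtotal A / (\<Sum>b\<in>A \<inter> X. u b) * u a)"
    by (intro sum.cong refl) (simp add: pbar_eq[OF assms])
  also have "\<dots> = v (A \<inter> X) / vtotal A / (\<Sum>b\<in>A \<inter> X. u b) * (\<Sum>a\<in>A \<inter> X. u a)"
    by (simp add: sum_distrib_left)
  also have "\<dots> = v (A \<inter> X) / vtotal A"
    using False u_pos sum_pos[of "A \<inter> X" u] by simp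
  finally show ?thesis .
qed

lemma sum_pbar_menu:
  assumes "A \<in> menus"
  shows "(\<Sum>a\<in>A. pbar a A) = 1"
proof -
  have "(\<Sum>a\<in>A. pbar a A) = (\<Sum>X\<in>Xs. v (A \<inter> X) / vtotal A)"
    by (subst sum_over_blocks[symmetric]) (use assms in \<open>intro sum.cong refl sum_pbar_block\<close>)
  also have "\<dots> = 1"
    using vtotal_nonzero[OF assms] by (simp add: sum_divide_distrib[symmetric] vtotal_def)
  finally show ?thesis .
qed

lemma pset_pext: "pset pext Y A = (\<Sum>a\<in>A \<inter> Y. pbar a A)"
  using sum.inter_restrict[of Y "\<lambda>a. pbar a A" A] by (simp add: pset_def pext_def Int_commute)

lemma pset_pext_pos: "A \<inter> Y \<noteq> {} \<Longrightarrow> pset pext Y A > 0"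
  unfolding pset_pext using pbar_pos by (intro sum_pos) (auto simp: menus_def)

lemma rat_pext_pos: "A \<inter> Y \<noteq> {} \<Longrightarrow> A \<inter> Y' \<noteq> {} \<Longrightarrow> rat pext A Y Y' > 0"
  unfolding rat_def using pset_pext_pos by simp

lemma rat_pext_eq_rat_pbar: "Y \<union> Y' \<subseteq> A \<Longrightarrow> rat pext A Y Y' = rat pbar A Y Y'"
  unfolding rat_def pset_def pext_def by (auto intro!: arg_cong2[where f = "(/)"] sum.cong)

lemma rat_pext_same_block:
  assumes "A \<in> menus" "X \<in> Xs" "a \<in> A \<inter> X" "b \<in> A \<inter> X"
  shows "rat pext A {a} {b} = u a / u b"
proof -
  define c where "c = v (A \<inter> X) / vtotal A / (\<Sum>b\<in>A \<inter> X. u b)"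
  have "pbar a A = c * u a" "pbar b A = c * u b"
    using pbar_eq[OF assms(1,2)] assms(3,4) by (simp_all add: c_def)
  moreover have "pbar a A > 0" using pbar_pos assms by auto
  ultimately show ?thesis
    using assms(3,4) u_pos[of b] by (auto simp: rat_singletons pext_def)
qed

lemma rat_pext_blocks:
  assumes "A \<in> menus" "X \<in> Xs" "X' \<in> Xs"
  shows "rat pext A X X' = v (A \<inter> X) / v (A \<inter> X')"
  using vtotal_nonzero[OF assms(1)]
  by (simp add: rat_def pset_pext sum_pbar_block[OF assms(1,2)] sum_pbar_block[OF assms(1,3)])

lemma dist_ab_pext_same_block: "X \<in> Xs \<Longrightarrow> a \<in> X \<Longrightarrow> b \<in> X \<Longrightarrow> dist_ab pext a b = 0"
  unfolding dist_ab_def by (intro avg_eq_0) (auto simp: rat_pext_same_block)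

lemma DD_pext_blocks: "DD pext Xs = 0"
proof -
  have "D1 pext Xs = 0"
    unfolding D1_def by (intro avg_eq_0) (auto simp: rat_pext_same_block)
  moreover have "D2 pext Xs = 0"
    unfolding D2_def by (intro avg_eq_0) (auto simp: rat_pext_blocks)
  ultimately show ?thesis by (simp add: DD_def)
qed

context
  fixes P :: "nat \<Rightarrow> 'a \<Rightarrow> 'a set \<Rightarrow> real"
  assumes P_tendsto: "\<forall>A\<in>menus. \<forall>a. (\<lambda>n. P n a A) \<longlonglongrightarrow> pext a A"
begin

lemma tendsto_sq_ln_rat_diff_pext:
  assumes "A \<in> menus" "B \<in> menus" "A \<inter> Y \<noteq> {}" "A \<inter> Y' \<noteq> {}" "B \<inter> Y \<noteq> {}" "B \<inter> Y' \<noteq> {}"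
  shows "(\<lambda>n. (ln (rat (P n) A Y Y') - ln (rat (P n) B Y Y'))\<^sup>2)
    \<longlonglongrightarrow> (ln (rat pext A Y Y') - ln (rat pext B Y Y'))\<^sup>2"
  using P_tendsto assms rat_pext_pos by (intro tendsto_sq_ln_rat_diff) auto

lemma tendsto_DD: "(\<lambda>n. DD (P n) Ys) \<longlonglongrightarrow> DD pext Ys"
proof -
  have "(\<lambda>n. D1 (P n) Ys) \<longlonglongrightarrow> D1 pext Ys" unfolding D1_def
    by (rule tendsto_avg, clarsimp, rule tendsto_sq_ln_rat_diff_pext) auto
  moreover have "(\<lambda>n. D2 (P n) Ys) \<longlonglongrightarrow> D2 pext Ys" unfolding D2_def
    by (rule tendsto_avg, clarsimp, rule tendsto_sq_ln_rat_diff_pext) auto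
  ultimately show ?thesis unfolding DD_def by (rule tendsto_add)
qed

lemma tendsto_dist_ab: "(\<lambda>n. dist_ab (P n) a b) \<longlonglongrightarrow> dist_ab pext a b"
  unfolding dist_ab_def
  by (rule tendsto_avg, clarsimp, rule tendsto_sq_ln_rat_diff_pext) auto

end

end

locale identified_nsc = nsc_representation +
  assumes nondeg: "nondegenerate Xs v u"
    and two_blocks: "card Xs \<ge> 2"
    and A1: "assumption1 Xs pbar"
begin

lemma other_block_exists: "\<exists>X'\<in>Xs. X' \<noteq> X"
proof (rule ccontr)
  assume "\<not> ?thesis"
  then have "Xs \<subseteq> {X}" by blast
  then have "card Xs \<le> 1" using card_mono[of "{X}" Xs] by simp
  with two_blocks show False by simp
qed

lemma assumption1_pext:
  assumes "X \<in> Xs" "X' \<in> Xs" "X \<noteq> X'" "Y \<noteq> {}" "Y \<subset> X" "Y' \<noteq> {}" "Y' \<subseteq> X'"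
  obtains A B where "A \<in> menus" "B \<in> menus" "Y \<union> Y' \<subseteq> A" "Y \<union> Y' \<subseteq> B"
    "rat pext A Y Y' \<noteq> rat pext B Y Y'"
proof -
  obtain A B where "A \<in> menus" "B \<in> menus" "Y \<union> Y' \<subseteq> A \<inter> B" "rat pbar A Y Y' \<noteq> rat pbar B Y Y'"
    using A1 assms unfolding assumption1_def by meson
  then show ?thesis
    using that rat_pext_eq_rat_pbar[of Y Y' A] rat_pext_eq_rat_pbar[of Y Y' B] by auto
qed

lemma rat_pext_separates_blocks:
  assumes "X \<in> Xs" "X' \<in> Xs" "X \<noteq> X'" "a \<in> X" "b \<in> X'"
  obtains A B where "A \<in> menus" "B \<in> menus" "a \<in> A" "b \<in> A" "a \<in> B" "b \<in> B"
    "rat pext A {a} {b} \<noteq> rat pext B {a} {b}"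
proof -
  consider "{a} \<subset> X" | "{b} \<subset> X'" | "X = {a}" "X' = {b}"
    using assms(4,5) by blast
  then show ?thesis
  proof cases
    case 1
    then show ?thesis
      using assumption1_pext[OF assms(1-3), of "{a}" "{b}"] assms(5) that by auto
  next
    case 2
    obtain A B where "A \<in> menus" "B \<in> menus" "{b} \<union> {a} \<subseteq> A" "{b} \<union> {a} \<subseteq> B"
      "rat pext A {b} {a} \<noteq> rat pext B {b} {a}"
      using assumption1_pext[OF assms(2,1) assms(3)[symmetric], of "{b}" "{a}"] 2 assms(4) by auto
    then show ?thesis
      using that rat_swap[of pext A "{a}"] rat_swap[of pext B "{a}"] by auto
  next
    case 3
    \<comment> \<open>Every singleton block is degenerate, and nondegeneracy allows at most one.\<close>
    let ?D = "{X\<in>Xs. \<exists>a\<in>X. \<forall>A. A \<subseteq> X \<and> a \<in> A \<longrightarrow> (\<Sum>x\<in>A. u x) / v A = u a / v {a}}"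
    have "{X, X'} \<subseteq> ?D"
      using assms(1,2) 3 by (auto simp: subset_singleton_iff)
    then have "card {X, X'} \<le> card ?D" by (intro card_mono) auto
    with nondeg assms(3) show ?thesis by (simp add: nondegenerate_def)
  qed
qed

lemma dist_ab_pext_pos:
  assumes "X \<in> Xs" "X' \<in> Xs" "X \<noteq> X'" "a \<in> X" "b \<in> X'"
  shows "dist_ab pext a b > 0"
proof -
  obtain A B where AB: "A \<in> menus" "B \<in> menus" "a \<in> A" "b \<in> A" "a \<in> B" "b \<in> B"
    "rat pext A {a} {b} \<noteq> rat pext B {a} {b}"
    using rat_pext_separates_blocks[OF assms] .
  show ?thesis unfolding dist_ab_def
  proof (rule avg_pos[where z = "(A, B)"])
    show "0 < (case (A, B) of (A, B) \<Rightarrow> (ln (rat pext A {a} {b}) - ln (rat pext B {a} {b}))\<^sup>2)"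
      using AB rat_pext_pos[of A "{a}" "{b}"] rat_pext_pos[of B "{a}" "{b}"] by simp
  qed (use AB in auto)
qed

lemma D1_pext_pos:
  assumes "Y \<in> Ys" "a \<in> Y" "b \<in> Y" "X \<in> Xs" "X' \<in> Xs" "X \<noteq> X'" "a \<in> X" "b \<in> X'"
  shows "D1 pext Ys > 0"
proof -
  obtain A B where AB: "A \<in> menus" "B \<in> menus" "a \<in> A" "b \<in> A" "a \<in> B" "b \<in> B"
    "rat pext A {a} {b} \<noteq> rat pext B {a} {b}"
    using rat_pext_separates_blocks[OF assms(4-8)] .
  show ?thesis unfolding D1_def
  proof (rule avg_pos[where z = "(Y, A, B, a, b)"])
    show "0 < (case (Y, A, B, a, b) of (Y, A, B, a, b) \<Rightarrow> (ln (rat pext A {a} {b}) - ln (rat pext B {a} {b}))\<^sup>2)"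
      using AB rat_pext_pos[of A "{a}" "{b}"] rat_pext_pos[of B "{a}" "{b}"] by simp
  qed (use assms AB in auto)
qed

lemma D2_pext_pos:
  assumes "Y \<in> Ys" "Y' \<in> Ys" "X \<in> Xs" "X' \<in> Xs" "X \<noteq> X'" "Y \<noteq> {}" "Y \<subset> X" "Y' \<noteq> {}" "Y' \<subseteq> X'"
  shows "D2 pext Ys > 0"
proof -
  obtain A B where AB: "A \<in> menus" "B \<in> menus" "Y \<union> Y' \<subseteq> A" "Y \<union> Y' \<subseteq> B"
    "rat pext A Y Y' \<noteq> rat pext B Y Y'"
    using assumption1_pext[OF assms(3-9)] .
  then have inter: "A \<inter> Y = Y" "B \<inter> Y = Y" "A \<inter> Y' = Y'" "B \<inter> Y' = Y'" by auto
  show ?thesis unfolding D2_def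
  proof (rule avg_pos[where z = "(Y, Y', A, B)"])
    show "0 < (case (Y, Y', A, B) of (Y, Y', A, B) \<Rightarrow> (ln (rat pext A Y Y') - ln (rat pext B Y Y'))\<^sup>2)"
      using AB rat_pext_pos[of A Y Y'] rat_pext_pos[of B Y Y'] inter assms(6,8) by simp
  qed (use assms AB inter in auto)
qed

lemma proper_part_of_block_exists:
  assumes "{} \<notin> Ys" "\<Union>Ys = UNIV" "Ys \<noteq> Xs" and refines: "\<forall>Y\<in>Ys. \<exists>X\<in>Xs. Y \<subseteq> X"
  shows "\<exists>Y\<in>Ys. \<exists>X\<in>Xs. Y \<subset> X"
proof (rule ccontr)
  assume "\<not> ?thesis"
  with refines have "Ys \<subseteq> Xs" by blast
  moreover have "Xs \<subseteq> Ys"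
  proof
    fix X assume "X \<in> Xs"
    then obtain x where "x \<in> X" using block_nonempty by blast
    then obtain Y X' where "Y \<in> Ys" "x \<in> Y" "X' \<in> Xs" "Y \<subseteq> X'"
      using assms(2) refines by blast
    with \<open>Ys \<subseteq> Xs\<close> \<open>X \<in> Xs\<close> \<open>x \<in> X\<close> show "X \<in> Ys" using block_unique by blast
  qed
  ultimately show False using assms(3) by blast
qed

lemma DD_pext_pos:
  assumes "{} \<notin> Ys" "\<Union>Ys = UNIV" "Ys \<noteq> Xs"
  shows "DD pext Ys > 0"
proof (cases "\<exists>Y\<in>Ys. \<exists>a\<in>Y. \<exists>b\<in>Y. \<exists>X\<in>Xs. \<exists>X'\<in>Xs. X \<noteq> X' \<and> a \<in> X \<and> b \<in> X'")
  case True
  then obtain Y a b X X' where "Y \<in> Ys" "a \<in> Y" "b \<in> Y" "X \<in> Xs" "X' \<in> Xs" "X \<noteq> X'"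
    "a \<in> X" "b \<in> X'" by blast
  then have "D1 pext Ys > 0" by (rule D1_pext_pos)
  then show ?thesis using D2_nonneg[of pext Ys] by (simp add: DD_def)
next
  case False
  have refines: "\<forall>Y\<in>Ys. \<exists>X\<in>Xs. Y \<subseteq> X"
  proof
    fix Y assume "Y \<in> Ys"
    then obtain a where "a \<in> Y" using assms(1) by (metis all_not_in_conv)
    obtain X where "X \<in> Xs" "a \<in> X" using block_exists by blast
    have "Y \<subseteq> X"
    proof
      fix b assume "b \<in> Y"
      obtain X' where "X' \<in> Xs" "b \<in> X'" using block_exists by blast
      with False \<open>Y \<in> Ys\<close> \<open>a \<in> Y\<close> \<open>b \<in> Y\<close> \<open>X \<in> Xs\<close> \<open>a \<in> X\<close> have "X' = X" by blast
      with \<open>b \<in> X'\<close> show "b \<in> X" by simp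
    qed
    with \<open>X \<in> Xs\<close> show "\<exists>X\<in>Xs. Y \<subseteq> X" ..
  qed
  then obtain Y X where "Y \<in> Ys" "X \<in> Xs" "Y \<subset> X"
    using proper_part_of_block_exists[OF assms] by blast
  obtain X' where "X' \<in> Xs" "X' \<noteq> X" using other_block_exists by blast
  then obtain x where "x \<in> X'" using block_nonempty by blast
  then obtain Y' X'' where "Y' \<in> Ys" "x \<in> Y'" "X'' \<in> Xs" "Y' \<subseteq> X''"
    using assms(2) refines by blast
  then have "Y' \<subseteq> X'" using block_unique \<open>X' \<in> Xs\<close> \<open>x \<in> X'\<close> by blast
  then have "D2 pext Ys > 0"
    using D2_pext_pos[of Y Ys Y' X X'] \<open>Y \<in> Ys\<close> \<open>X \<in> Xs\<close> \<open>Y \<subset> X\<close> \<open>Y' \<in> Ys\<close> \<open>x \<in> Y'\<close>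
      \<open>X' \<in> Xs\<close> \<open>X' \<noteq> X\<close> assms(1) by auto
  then show ?thesis using D1_nonneg[of pext Ys] by (simp add: DD_def)
qed

section \<open>Recovery of the true partition\<close>

definition same_block :: "'a rel" where
  "same_block = {(a, b). \<exists>X\<in>Xs. a \<in> X \<and> b \<in> X}"

lemma quotient_same_block: "UNIV // same_block = Xs"
  unfolding same_block_def by (rule partition_on_eq_quotient[OF partition_Xs])

lemma trans_same_block: "trans same_block"
  unfolding same_block_def trans_def using block_unique by blast

lemma dist_ab_pext_threshold:
  obtains \<epsilon> where "\<epsilon> > 0" "\<And>a b. dist_ab pext a b \<noteq> \<epsilon>"
    "\<And>a b. dist_ab pext a b < \<epsilon> \<longleftrightarrow> (a, b) \<in> same_block"
proof -
  define \<delta> where "\<delta> = Min (insert 1 {dist_ab pext a b | a b. (a, b) \<notin> same_block})"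
  have finite: "finite {dist_ab pext a b | a b. (a, b) \<notin> same_block}"
    by (rule finite_dist_ab_values)
  have "dist_ab pext a b > 0" if "(a, b) \<notin> same_block" for a b
  proof -
    obtain X X' where "X \<in> Xs" "a \<in> X" "X' \<in> Xs" "b \<in> X'" using block_exists by blast
    with that show ?thesis using dist_ab_pext_pos unfolding same_block_def by blast
  qed
  then have "\<delta> > 0" unfolding \<delta>_def using finite by auto
  have across: "\<delta> \<le> dist_ab pext a b" if "(a, b) \<notin> same_block" for a b
    unfolding \<delta>_def using finite that by (intro Min_le) auto
  have within: "dist_ab pext a b = 0" if "(a, b) \<in> same_block" for a b
    using that dist_ab_pext_same_block unfolding same_block_def by blast
  show ?thesis
  proof (rule that[of "\<delta> / 2"])
    fix a b
    show "dist_ab pext a b \<noteq> \<delta> / 2" "dist_ab pext a b < \<delta> / 2 \<longleftrightarrow> (a, b) \<in> same_block"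
      using across[of a b] within[of a b] \<open>\<delta> > 0\<close> by (cases "(a, b) \<in> same_block"; simp)+
  qed (use \<open>\<delta> > 0\<close> in simp)
qed

context
  fixes P :: "nat \<Rightarrow> 'a \<Rightarrow> 'a set \<Rightarrow> real"
  assumes P_tendsto: "\<forall>A\<in>menus. \<forall>a. (\<lambda>n. P n a A) \<longlonglongrightarrow> pext a A"
begin

lemma eventually_simrel_eq_same_block:
  assumes "\<And>a b. dist_ab pext a b \<noteq> \<epsilon>" "\<And>a b. dist_ab pext a b < \<epsilon> \<longleftrightarrow> (a, b) \<in> same_block"
  shows "eventually (\<lambda>n. simrel (P n) \<epsilon> = same_block) sequentially"
proof -
  have "eventually (\<lambda>n. dist_ab (P n) a b < \<epsilon> \<longleftrightarrow> (a, b) \<in> same_block) sequentially" for a b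
  proof (cases "dist_ab pext a b < \<epsilon>")
    case True
    then show ?thesis using assms(2) order_tendstoD(2)[OF tendsto_dist_ab[OF P_tendsto]]
      by (auto elim: eventually_mono)
  next
    case False
    with assms(1) have "dist_ab pext a b > \<epsilon>" by (simp add: order.strict_iff_order)
    then show ?thesis using assms(2) order_tendstoD(1)[OF tendsto_dist_ab[OF P_tendsto]]
      by (fastforce elim: eventually_mono)
  qed
  then have "eventually (\<lambda>n. \<forall>a b. dist_ab (P n) a b < \<epsilon> \<longleftrightarrow> (a, b) \<in> same_block) sequentially"
    by (intro eventually_all_finite)
  then show ?thesis
    by (rule eventually_mono) (auto simp: simrel_def)
qed

lemma eventually_blocks_in_cands: "eventually (\<lambda>n. Xs \<in> cands (P n)) sequentially"
proof -
  obtain \<epsilon> where \<epsilon>: "\<epsilon> > 0" "\<And>a b. dist_ab pext a b \<noteq> \<epsilon>"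
    "\<And>a b. dist_ab pext a b < \<epsilon> \<longleftrightarrow> (a, b) \<in> same_block"
    using dist_ab_pext_threshold by blast
  obtain X X' where "X \<in> Xs" "X' \<in> Xs" "X \<noteq> X'"
    using other_block_exists block_exists by metis
  moreover obtain a b where "a \<in> X" "b \<in> X'"
    using block_nonempty \<open>X \<in> Xs\<close> \<open>X' \<in> Xs\<close> by blast
  ultimately have ab: "(a, b) \<notin> same_block"
    unfolding same_block_def using block_unique by blast
  show ?thesis
    using eventually_simrel_eq_same_block[OF \<epsilon>(2,3)]
  proof (rule eventually_mono)
    fix n assume sim: "simrel (P n) \<epsilon> = same_block"
    have "dist_ab (P n) a b \<le> epsbar (P n)"
      unfolding epsbar_def by (rule Max_ge[OF finite_dist_ab_values]) blast
    moreover have "\<epsilon> \<le> dist_ab (P n) a b"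
      using ab sim by (auto simp: simrel_def)
    ultimately have "\<epsilon> \<le> epsbar (P n)" by linarith
    then show "Xs \<in> cands (P n)"
      unfolding cands_def mem_Collect_eq using \<epsilon>(1) sim quotient_same_block trans_same_block
      by (intro exI[of _ \<epsilon>]) simp
  qed
qed

lemma eventually_blocks_minimise_DD:
  "eventually (\<lambda>n. \<forall>Ys\<in>cands (P n). Ys \<noteq> Xs \<longrightarrow> DD (P n) Xs < DD (P n) Ys) sequentially"
proof -
  have "eventually (\<lambda>n. \<forall>Ys\<in>{Ys. {} \<notin> Ys \<and> \<Union>Ys = UNIV \<and> Ys \<noteq> Xs}. DD (P n) Xs < DD (P n) Ys) sequentially"
  proof (intro eventually_ball_finite ballI)
    fix Ys assume "Ys \<in> {Ys. {} \<notin> Ys \<and> \<Union>Ys = UNIV \<and> Ys \<noteq> Xs}"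
    then have "0 < DD pext Ys - DD pext Xs" using DD_pext_pos DD_pext_blocks by simp
    moreover have "(\<lambda>n. DD (P n) Ys - DD (P n) Xs) \<longlonglongrightarrow> DD pext Ys - DD pext Xs"
      using P_tendsto by (intro tendsto_diff tendsto_DD)
    ultimately have "eventually (\<lambda>n. 0 < DD (P n) Ys - DD (P n) Xs) sequentially"
      by (rule order_tendstoD(1)[rotated])
    then show "eventually (\<lambda>n. DD (P n) Xs < DD (P n) Ys) sequentially"
      by (rule eventually_mono) simp
  qed simp
  then show ?thesis
    by (rule eventually_mono) (use cands_cover in blast)
qed

lemma eventually_blocks_unique_minimiser:
  "eventually (\<lambda>n. Xs \<in> cands (P n) \<and>
    (\<forall>Ys\<in>cands (P n). Ys \<noteq> Xs \<longrightarrow> DD (P n) Xs < DD (P n) Ys)) sequentially"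
  using eventually_blocks_in_cands eventually_blocks_minimise_DD by (rule eventually_conj)

end

end

theorem corollary2:
  fixes Xs :: "('a::finite) set set"
    and v :: "'a set \<Rightarrow> real" and u :: "'a \<Rightarrow> real"
    and pbar :: "'a \<Rightarrow> 'a set \<Rightarrow> real"
    and M :: "'w measure"
    and Ch :: "'a set \<Rightarrow> nat \<Rightarrow> 'w \<Rightarrow> 'a"
    and N :: "'a set \<Rightarrow> nat \<Rightarrow> nat"
  assumes nsc: "is_NSC Xs v u pbar"
    and nondeg: "nondegenerate Xs v u"
    and K2: "card Xs \<ge> 2"
    and A1: "assumption1 Xs pbar"
    and prob: "prob_space M"
    and indep: "prob_space.indep_vars M (\<lambda>_. count_space UNIV) (\<lambda>(A, k). Ch A k) (menus \<times> UNIV)"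
    and distr: "\<forall>A\<in>menus. \<forall>k. \<forall>a\<in>A. measure M {\<omega> \<in> space M. Ch A k \<omega> = a} = pbar a A"
    and nested: "\<forall>A\<in>menus. mono (N A)"
    and Nstar: "filterlim (\<lambda>n. Min ((\<lambda>A. N A n) ` menus)) at_top sequentially"
  shows "AE \<omega> in M. eventually (\<lambda>n.
            Xs \<in> cands (freq Ch N n \<omega>) \<and>
            (\<forall>Ys \<in> cands (freq Ch N n \<omega>). Ys \<noteq> Xs \<longrightarrow>
                DD (freq Ch N n \<omega>) Xs < DD (freq Ch N n \<omega>) Ys)) sequentially"
proof -
  interpret prob_space M by (fact prob)
  interpret identified_nsc Xs v u pbar by unfold_locales (fact nsc nondeg K2 A1)+
  \<comment> \<open>The sample sizes need not be nested: \<open>N A n \<rightarrow> \<infinity>\<close> suffices.\<close>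
  have "AE \<omega> in M. \<forall>A\<in>menus. \<forall>a. (\<lambda>n. freq Ch N n \<omega> a A) \<longlonglongrightarrow> pext a A"
    using AE_freq_tendsto[OF indep distr _ Nstar] sum_pbar_menu by (simp add: pext_def)
  then show ?thesis
    by (rule AE_mp) (auto intro: eventually_blocks_unique_minimiser)
qed

end
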